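(* Let $G$ be a tree with $n\ge k\ge1$ vertices and let $P^*$ be a longest path of $G$. Then $h^r_k(G)\ge (n-k)+\sum_{e\in E} d^k_{P^*}(e)$.
   Context: All graphs are finite, simple, undirected. A configuration of $k$ agents is a $k$-tuple of pairwise distinct vertices of $G$ whose induced subgraph is connected (identified with its vertex set when convenient). Configurations $(v_1,\dots,v_k)$, $(v'_1,\dots,v'_k)$ are adjacent if for every $i$ either $v_i=v'_i$ or $(v_i,v'_i)\in E$. A restricted transition walk is a sequence of configurations $\mathcal C_0,\dots,\mathcal C_l$ such that consecutive configurations are adjacent and $\mathcal C_{t+1}$ contains exactly one vertex not in $\mathcal C_t$; it is spanning if every vertex lies in some $\mathcal C_t$. $h^r_k(G)$ is the minimum length of a spanning restricted transition walk. For a tree $G$, a path $P$ and $k\ge1$, define $d^k_P(e)\in\{0,1\}$ for every edge $e$: $d^k_P(e)=0$ if $e$ lies on $P$; otherwise write $e=(u,v)$ with $u$ closer to $P$ than $v$, let $T_P(e)$ be the component of $G-e$ containing $v$, rooted at $v$, and set $d^k_P(e)=1$ if $T_P(e)$ has height at least $k-1$ (equivalently, some vertex of $T_P(e)$ has distance at least $k$ from $u$), and $d^k_P(e)=0$ otherwise. *)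

theory Defs
  imports Main "HOL-Library.Extended_Nat"
begin

definition simple_graph :: "'a set \<Rightarrow> 'a set set \<Rightarrow> bool" where
  "simple_graph V E \<longleftrightarrow> finite V \<and> (\<forall>e\<in>E. \<exists>u v. e = {u, v} \<and> u \<noteq> v \<and> u \<in> V \<and> v \<in> V)"

definition adj_rel :: "'a set set \<Rightarrow> ('a \<times> 'a) set" where
  "adj_rel E = {(x, y). {x, y} \<in> E}"

definition connected_on :: "'a set set \<Rightarrow> 'a set \<Rightarrow> bool" where
  "connected_on E S \<longleftrightarrow> S \<noteq> {} \<and>
     (\<forall>u\<in>S. \<forall>v\<in>S. (u, v) \<in> (adj_rel E \<inter> (S \<times> S))\<^sup>*)"

definition is_path :: "'a set \<Rightarrow> 'a set set \<Rightarrow> 'a list \<Rightarrow> bool" where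
  "is_path V E p \<longleftrightarrow> p \<noteq> [] \<and> distinct p \<and> set p \<subseteq> V \<and>
     (\<forall>i. Suc i < length p \<longrightarrow> {p ! i, p ! Suc i} \<in> E)"

definition has_cycle :: "'a set \<Rightarrow> 'a set set \<Rightarrow> bool" where
  "has_cycle V E \<longleftrightarrow> (\<exists>p. is_path V E p \<and> length p \<ge> 3 \<and> {last p, hd p} \<in> E)"

definition is_tree :: "'a set \<Rightarrow> 'a set set \<Rightarrow> bool" where
  "is_tree V E \<longleftrightarrow> simple_graph V E \<and> connected_on E V \<and> \<not> has_cycle V E"

definition longest_path :: "'a set \<Rightarrow> 'a set set \<Rightarrow> 'a list \<Rightarrow> bool" where
  "longest_path V E p \<longleftrightarrow> is_path V E p \<and> (\<forall>q. is_path V E q \<longrightarrow> length q \<le> length p)"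

definition path_edges :: "'a list \<Rightarrow> 'a set set" where
  "path_edges p = {{p ! i, p ! Suc i} | i. Suc i < length p}"

definition gdist :: "'a set set \<Rightarrow> 'a \<Rightarrow> 'a \<Rightarrow> nat" where
  "gdist E u w = (LEAST n. (u, w) \<in> adj_rel E ^^ n)"

definition dist_to_path :: "'a set set \<Rightarrow> 'a \<Rightarrow> 'a list \<Rightarrow> nat" where
  "dist_to_path E u p = (LEAST n. \<exists>x\<in>set p. gdist E u x = n)"

definition comp_minus :: "'a set \<Rightarrow> 'a set set \<Rightarrow> 'a set \<Rightarrow> 'a \<Rightarrow> 'a set" where
  "comp_minus V E e v = {w \<in> V. (v, w) \<in> (adj_rel (E - {e}))\<^sup>*}"

definition dkP :: "nat \<Rightarrow> 'a set \<Rightarrow> 'a set set \<Rightarrow> 'a list \<Rightarrow> 'a set \<Rightarrow> nat" where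
  "dkP k V E p e =
     (if e \<in> path_edges p then 0
      else if (\<exists>u v. e = {u, v} \<and> dist_to_path E u p < dist_to_path E v p \<and>
                    (\<exists>w \<in> comp_minus V E e v. gdist E u w \<ge> k))
      then 1 else 0)"

definition is_config :: "'a set \<Rightarrow> 'a set set \<Rightarrow> nat \<Rightarrow> 'a list \<Rightarrow> bool" where
  "is_config V E k c \<longleftrightarrow> length c = k \<and> distinct c \<and> set c \<subseteq> V \<and> connected_on E (set c)"

definition config_adj :: "'a set set \<Rightarrow> 'a list \<Rightarrow> 'a list \<Rightarrow> bool" where
  "config_adj E c c' \<longleftrightarrow> length c = length c' \<and>
     (\<forall>i < length c. c ! i = c' ! i \<or> {c ! i, c' ! i} \<in> E)"

(* restricted transition walk C_0, ..., C_l given as a nonempty list (its length is l+1) *)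
definition restricted_walk :: "'a set \<Rightarrow> 'a set set \<Rightarrow> nat \<Rightarrow> 'a list list \<Rightarrow> bool" where
  "restricted_walk V E k cs \<longleftrightarrow> cs \<noteq> [] \<and> (\<forall>c\<in>set cs. is_config V E k c) \<and>
     (\<forall>t. Suc t < length cs \<longrightarrow>
        config_adj E (cs ! t) (cs ! Suc t) \<and> card (set (cs ! Suc t) - set (cs ! t)) = 1)"

definition spanning_walk :: "'a set \<Rightarrow> 'a set set \<Rightarrow> nat \<Rightarrow> 'a list list \<Rightarrow> bool" where
  "spanning_walk V E k cs \<longleftrightarrow> restricted_walk V E k cs \<and> (\<Union>c\<in>set cs. set c) = V"

(* h^r_k(G): minimum length; infinity if no spanning restricted transition walk exists *)
definition hrk :: "nat \<Rightarrow> 'a set \<Rightarrow> 'a set set \<Rightarrow> enat" where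
  "hrk k V E = (INF cs \<in> {cs. spanning_walk V E k cs}. enat (length cs - 1))"

end

theory Submission
  imports Defs
begin

(* Each step of a restricted walk adds one vertex through one edge, so it is the step at which the
   walk enters (meets after having avoided) a side of at most one edge, and the length l of the walk
   is at least the total number of entries.  An edge not contained in the initial configuration C 0
   needs an entry, and there are at least n - k such edges (send each vertex outside C 0 to its first
   edge towards C 0).  Let Q be a path from C 0 to the final configuration and let uv be a deep arc
   of Q: Q lies on u's side and some w behind v has d u w >= k.  A connected set of k vertices
   containing w and meeting u's side would contain u, so after visiting w the walk has to enter u's
   side once more: a further entry.  Hence l >= (n - k) + #deep arcs of Q.  Finally a longest path P
   has no more deep arcs than Q: deep arcs of P that Q does not cross are kept or reversed, and those
   that Q crosses are matched with arcs of P at the same distance from the gates (projections onto P)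
   of the ends of Q. *)

lemma adj_rel_iff [simp]: "(x, y) \<in> adj_rel F \<longleftrightarrow> {x, y} \<in> F"
  unfolding adj_rel_def by simp

lemma sym_adj_rel: "sym (adj_rel F)"
  unfolding sym_def by (simp add: insert_commute)

lemma relpow_sym: "sym R \<Longrightarrow> (a, b) \<in> R ^^ n \<Longrightarrow> (b, a) \<in> R ^^ n"
proof (induction n arbitrary: a b)
  case (Suc n)
  then obtain c where "(a, c) \<in> R" "(c, b) \<in> R ^^ n"
    by (metis relpow_Suc_D2)
  then show ?case
    using Suc by (meson relpow_Suc_I symD)
qed simp

lemma adj_rel_rtrancl_sym:
  assumes "(a, b) \<in> (adj_rel F)\<^sup>*"
  shows "(b, a) \<in> (adj_rel F)\<^sup>*"
proof -
  have "((adj_rel F)\<^sup>*)\<inverse> = (adj_rel F)\<^sup>*"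
    using sym_adj_rel[of F] by (metis rtrancl_converse sym_conv_converse_eq)
  then show ?thesis
    using converseI[OF assms] by simp
qed

lemma exists_exit_step:
  assumes "a \<le> b" "P a" "\<not> P b"
  shows "\<exists>t. a \<le> t \<and> t < b \<and> P t \<and> \<not> P (Suc t)"
proof (rule ccontr)
  assume no_exit: "\<not> (\<exists>t. a \<le> t \<and> t < b \<and> P t \<and> \<not> P (Suc t))"
  have "P b"
    using assms(1)
  proof (induction rule: dec_induct)
    case base
    show ?case
      by (rule assms(2))
  next
    case (step n)
    then show ?case
      using no_exit by blast
  qed
  with assms(3) show False ..
qed

lemma is_path_mono: "is_path W F p \<Longrightarrow> W \<subseteq> W' \<Longrightarrow> F \<subseteq> F' \<Longrightarrow> is_path W' F' p"
  unfolding is_path_def by blast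

lemma is_path_edge: "is_path W F p \<Longrightarrow> Suc i < length p \<Longrightarrow> {p ! i, p ! Suc i} \<in> F"
  unfolding is_path_def by blast

lemma is_path_nth: "is_path W F p \<Longrightarrow> i < length p \<Longrightarrow> p ! i \<in> W"
  unfolding is_path_def by auto

lemma is_path_drop: "is_path W F p \<Longrightarrow> i < length p \<Longrightarrow> is_path W F (drop i p)"
  unfolding is_path_def by (auto dest: in_set_dropD simp: add.commute)

lemma is_path_Cons:
  assumes "is_path W F p" "y \<in> W" "y \<notin> set p" "{y, hd p} \<in> F"
  shows "is_path W F (y # p)"
  unfolding is_path_def
proof (intro conjI allI impI)
  fix i assume "Suc i < length (y # p)"
  then show "{(y # p) ! i, (y # p) ! Suc i} \<in> F"
    using assms by (cases i) (auto simp: is_path_def hd_conv_nth)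
qed (use assms in \<open>auto simp: is_path_def\<close>)

lemma is_path_rev: "is_path W F p \<Longrightarrow> is_path W F (rev p)"
  unfolding is_path_def
proof (intro conjI allI impI; (elim conjE)?)
  fix i assume p: "\<forall>i. Suc i < length p \<longrightarrow> {p ! i, p ! Suc i} \<in> F" and i: "Suc i < length (rev p)"
  then have "{p ! (length p - Suc (Suc i)), p ! Suc (length p - Suc (Suc i))} \<in> F"
    by simp
  moreover have "Suc (length p - Suc (Suc i)) = length p - Suc i"
    using i by simp
  ultimately show "{rev p ! i, rev p ! Suc i} \<in> F"
    using i by (simp add: rev_nth insert_commute)
qed auto

lemma rtrancl_imp_is_path:
  assumes "(a, b) \<in> (adj_rel F \<inter> W \<times> W)\<^sup>*" "b \<in> W"
  shows "\<exists>p. is_path W F p \<and> hd p = a \<and> last p = b"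
  using assms(1)
proof (induction rule: converse_rtrancl_induct)
  case base
  show ?case
    using assms(2) by (intro exI[of _ "[b]"]) (simp add: is_path_def)
next
  case (step y z)
  then obtain p where p: "is_path W F p" "hd p = z" "last p = b"
    by blast
  show ?case
  proof (cases "y \<in> set p")
    case True
    then obtain i where "i < length p" "p ! i = y"
      by (auto simp: in_set_conv_nth)
    then show ?thesis
      using p by (intro exI[of _ "drop i p"]) (auto simp: is_path_drop hd_drop_conv_nth)
  next
    case False
    have "is_path W F (y # p)"
      using step.hyps(1) p False by (intro is_path_Cons) auto
    moreover have "p \<noteq> []"
      using p(1) unfolding is_path_def by simp
    ultimately show ?thesis
      using p by (intro exI[of _ "y # p"]) auto
  qed
qed

locale tree =
  fixes V :: "'a set" and E :: "'a set set"
  assumes is_tree: "is_tree V E"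
begin

abbreviation d :: "'a \<Rightarrow> 'a \<Rightarrow> nat" where
  "d \<equiv> gdist E"

abbreviation branch :: "'a \<Rightarrow> 'a \<Rightarrow> 'a set" where
  "branch u v \<equiv> comp_minus V E {u, v} v"

lemma finite_V: "finite V"
  using is_tree unfolding is_tree_def simple_graph_def by auto

lemma edge_cases: "e \<in> E \<Longrightarrow> \<exists>u v. e = {u, v} \<and> u \<noteq> v \<and> u \<in> V \<and> v \<in> V"
  using is_tree unfolding is_tree_def simple_graph_def by auto

lemma finite_E: "finite E"
proof -
  have "E \<subseteq> Pow V"
    using edge_cases by fastforce
  then show ?thesis
    using finite_V by (meson finite_Pow_iff finite_subset)
qed

lemma edge_in_V: "{x, y} \<in> E \<Longrightarrow> x \<in> V \<and> y \<in> V \<and> x \<noteq> y"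
  using edge_cases[of "{x, y}"] by (auto simp: doubleton_eq_iff)

lemma connected: "x \<in> V \<Longrightarrow> y \<in> V \<Longrightarrow> (x, y) \<in> (adj_rel E \<inter> V \<times> V)\<^sup>*"
  using is_tree unfolding is_tree_def connected_on_def by simp

lemma adj_rel_subset_V: "F \<subseteq> E \<Longrightarrow> adj_rel F \<inter> V \<times> V = adj_rel F"
  using edge_in_V by auto

lemma path_exists: "a \<in> V \<Longrightarrow> b \<in> V \<Longrightarrow> \<exists>q. is_path V E q \<and> hd q = a \<and> last q = b"
  by (meson connected rtrancl_imp_is_path)

lemma gdist_relpow: "x \<in> V \<Longrightarrow> y \<in> V \<Longrightarrow> (x, y) \<in> adj_rel E ^^ d x y"
  unfolding gdist_def using rtrancl_mono[OF Int_lower1] connected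
  by (metis (no_types, lifting) LeastI rtrancl_power subsetD)

lemma gdist_le: "(x, y) \<in> adj_rel E ^^ n \<Longrightarrow> d x y \<le> n"
  unfolding gdist_def by (rule Least_le)

lemma gdist_self [simp]: "d x x = 0"
  using gdist_le[of x x 0] by simp

lemma gdist_sym: "d x y = d y x"
proof -
  have "(x, y) \<in> adj_rel E ^^ n \<longleftrightarrow> (y, x) \<in> adj_rel E ^^ n" for n
    using relpow_sym[OF sym_adj_rel] by metis
  then show ?thesis
    unfolding gdist_def by simp
qed

lemma gdist_triangle: "x \<in> V \<Longrightarrow> y \<in> V \<Longrightarrow> z \<in> V \<Longrightarrow> d x z \<le> d x y + d y z"
  using gdist_relpow[of x y] gdist_relpow[of y z] by (intro gdist_le) (auto simp: relpow_add)

lemma gdist_eq_0_iff: "x \<in> V \<Longrightarrow> y \<in> V \<Longrightarrow> d x y = 0 \<longleftrightarrow> x = y"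
  using gdist_relpow[of x y] by auto

lemma gdist_edge: "{x, y} \<in> E \<Longrightarrow> d x y = 1"
  using gdist_le[of x y 1] gdist_eq_0_iff[of x y] edge_in_V[of x y] by fastforce

lemma exists_closer_neighbour:
  assumes "x \<in> V" "y \<in> V" "x \<noteq> y"
  shows "\<exists>c. {x, c} \<in> E \<and> Suc (d c y) = d x y"
proof -
  obtain m where m: "d x y = Suc m"
    using assms gdist_eq_0_iff not0_implies_Suc by blast
  then obtain c where c: "{x, c} \<in> E" "(c, y) \<in> adj_rel E ^^ m"
    using gdist_relpow[OF assms(1,2)] by (metis adj_rel_iff relpow_Suc_D2)
  have "d x y \<le> d x c + d c y"
    using gdist_triangle c edge_in_V assms by blast
  then have "Suc (d c y) = d x y"
    using gdist_le[OF c(2)] gdist_edge[OF c(1)] m by linarith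
  then show ?thesis
    using c by blast
qed

lemma branch_subset_V: "branch u v \<subseteq> V"
  unfolding comp_minus_def by auto

lemma branch_self: "v \<in> V \<Longrightarrow> v \<in> branch u v"
  unfolding comp_minus_def by auto

lemma branch_closed:
  assumes "c \<in> branch u v" "{c, b} \<in> E" "{c, b} \<noteq> {u, v}"
  shows "b \<in> branch u v"
proof -
  have "(v, c) \<in> (adj_rel (E - {{u, v}}))\<^sup>*" "(c, b) \<in> adj_rel (E - {{u, v}})"
    using assms unfolding comp_minus_def by auto
  then have "(v, b) \<in> (adj_rel (E - {{u, v}}))\<^sup>*"
    by (rule rtrancl_into_rtrancl)
  then show ?thesis
    using edge_in_V[OF assms(2)] unfolding comp_minus_def by auto
qed

lemma no_bypass:
  assumes e: "{u, v} \<in> E"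
  shows "(v, u) \<notin> (adj_rel (E - {{u, v}}))\<^sup>*"
proof
  let ?F = "E - {{u, v}}"
  assume "(v, u) \<in> (adj_rel ?F)\<^sup>*"
  moreover have "adj_rel ?F \<inter> V \<times> V = adj_rel ?F"
    by (rule adj_rel_subset_V) blast
  moreover have uv: "u \<in> V" "u \<noteq> v"
    using edge_in_V[OF e] by auto
  ultimately obtain p where p: "is_path V ?F p" "hd p = v" "last p = u"
    by (metis rtrancl_imp_is_path)
  have "length p \<noteq> 0"
    using p(1) unfolding is_path_def by simp
  moreover have "length p \<noteq> 1"
  proof
    assume "length p = 1"
    then have "hd p = last p"
      by (auto simp: length_Suc_conv)
    then show False
      using p uv by simp
  qed
  moreover have "length p \<noteq> 2"
  proof
    assume "length p = 2"
    then obtain a b where "p = [a, b]"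
      by (auto simp: length_Suc_conv numeral_2_eq_2)
    then show False
      using is_path_edge[OF p(1), of 0] p(2,3) by (simp add: insert_commute)
  qed
  ultimately have "3 \<le> length p"
    by linarith
  moreover have "is_path V E p"
    using is_path_mono[OF p(1)] by blast
  ultimately have "has_cycle V E"
    using p e unfolding has_cycle_def by (metis insert_commute)
  then show False
    using is_tree unfolding is_tree_def by simp
qed

lemma branches_disjoint:
  assumes e: "{u, v} \<in> E"
  shows "branch u v \<inter> branch v u = {}"
proof (rule ccontr)
  assume "branch u v \<inter> branch v u \<noteq> {}"
  then obtain z where vz: "(v, z) \<in> (adj_rel (E - {{u, v}}))\<^sup>*" and uz: "(u, z) \<in> (adj_rel (E - {{u, v}}))\<^sup>*"
    unfolding comp_minus_def by (auto simp: insert_commute)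
  then show False
    using no_bypass[OF e] rtrancl_trans[OF vz adj_rel_rtrancl_sym[OF uz]] by blast
qed

lemma branches_cover:
  assumes e: "{u, v} \<in> E" and z: "z \<in> V"
  shows "z \<in> branch u v \<or> z \<in> branch v u"
proof -
  have uV: "u \<in> V" "v \<in> V"
    using edge_in_V[OF e] by auto
  have "(u, z) \<in> (adj_rel E)\<^sup>*"
    using connected[OF uV(1) z] rtrancl_mono[OF Int_lower1] by blast
  then show ?thesis
  proof (induction rule: rtrancl_induct)
    case base
    then show ?case
      using branch_self[OF uV(1)] by simp
  next
    case (step y z)
    then have yz: "{y, z} \<in> E"
      by simp
    show ?case
    proof (cases "{y, z} = {u, v}")
      case True
      then show ?thesis
        using branch_self uV by (auto simp: doubleton_eq_iff)
    next
      case False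
      then show ?thesis
        using step.IH branch_closed[of y u v z] branch_closed[of y v u z] yz by (auto simp: insert_commute)
    qed
  qed
qed

lemma edge_leaving_branch:
  assumes "{u, v} \<in> E" "c \<in> branch u v" "b \<in> V" "b \<notin> branch u v" "{c, b} \<in> E"
  shows "c = v \<and> b = u"
proof -
  have "{c, b} = {u, v}"
    using assms branch_closed by blast
  moreover have "b \<noteq> v"
    using assms branch_self edge_in_V by blast
  ultimately show ?thesis
    by (auto simp: doubleton_eq_iff)
qed

lemma relpow_leaving_branch:
  assumes e: "{u, v} \<in> E"
  shows "(a, b) \<in> adj_rel E ^^ n \<Longrightarrow> a \<in> branch u v \<Longrightarrow> b \<in> V \<Longrightarrow> b \<notin> branch u v \<Longrightarrow>
    \<exists>n1 n2. n = n1 + 1 + n2 \<and> (a, v) \<in> adj_rel E ^^ n1 \<and> (u, b) \<in> adj_rel E ^^ n2"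
proof (induction n arbitrary: b)
  case (Suc n)
  then obtain c where c: "(a, c) \<in> adj_rel E ^^ n" "{c, b} \<in> E"
    by auto
  show ?case
  proof (cases "c \<in> branch u v")
    case True
    then have "c = v \<and> b = u"
      using edge_leaving_branch[OF e] Suc.prems c(2) by blast
    then show ?thesis
      using c(1) by (intro exI[of _ n] exI[of _ 0]) auto
  next
    case False
    then obtain n1 n2 where "n = n1 + 1 + n2" "(a, v) \<in> adj_rel E ^^ n1" "(u, c) \<in> adj_rel E ^^ n2"
      using Suc.IH[OF c(1) Suc.prems(2)] edge_in_V[OF c(2)] by blast
    then show ?thesis
      using c(2) by (intro exI[of _ n1] exI[of _ "Suc n2"]) auto
  qed
qed simp

lemma gdist_across_edge:
  assumes e: "{u, v} \<in> E" and a: "a \<in> branch u v" and b: "b \<in> V" "b \<notin> branch u v"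
  shows "d a b = d a v + 1 + d u b"
proof -
  have V: "a \<in> V" "u \<in> V" "v \<in> V"
    using a branch_subset_V edge_in_V[OF e] by auto
  obtain n1 n2 where n: "d a b = n1 + 1 + n2" "(a, v) \<in> adj_rel E ^^ n1" "(u, b) \<in> adj_rel E ^^ n2"
    using relpow_leaving_branch[OF e gdist_relpow[OF V(1) b(1)] a b] by blast
  have "d a b \<le> d a v + d v b" "d v b \<le> d v u + d u b"
    using gdist_triangle V b by auto
  then show ?thesis
    using gdist_le[OF n(2)] gdist_le[OF n(3)] gdist_edge[OF e] n(1) by (simp add: gdist_sym)
qed

lemma gdist_in_branch:
  assumes e: "{u, v} \<in> E" and z: "z \<in> branch u v"
  shows "d u z = Suc (d v z)"
proof -
  have "u \<in> branch v u"
    using branch_self edge_in_V[OF e] by simp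
  then have "u \<notin> branch u v"
    using branches_disjoint[OF e] by blast
  then show ?thesis
    using gdist_across_edge[OF e z] edge_in_V[OF e] by (simp add: gdist_sym)
qed

lemma gdist_edge_cases:
  assumes "{u, v} \<in> E" "z \<in> V"
  shows "d u z = Suc (d v z) \<or> d v z = Suc (d u z)"
proof -
  have "{v, u} \<in> E"
    using assms(1) by (simp add: insert_commute)
  then show ?thesis
    using branches_cover[OF assms] gdist_in_branch assms(1) by blast
qed

lemma mem_branch_iff:
  assumes e: "{u, v} \<in> E" and z: "z \<in> V"
  shows "z \<in> branch u v \<longleftrightarrow> d v z < d u z"
proof
  assume "d v z < d u z"
  moreover have "{v, u} \<in> E"
    using e by (simp add: insert_commute)
  ultimately show "z \<in> branch u v"
    using branches_cover[OF e z] gdist_in_branch by fastforce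
qed (simp add: gdist_in_branch[OF e])

lemma gdist_through_edge:
  assumes "{u, v} \<in> E" "z \<in> V" "w \<in> V" "d u z < d v z" "d v w < d u w"
  shows "d z w = d z u + 1 + d v w"
  using gdist_across_edge[of u v w z] mem_branch_iff[of u v] assms by (simp add: gdist_sym)

lemma path_ends_in_V: "is_path V E Q \<Longrightarrow> hd Q \<in> V \<and> last Q \<in> V"
  unfolding is_path_def by auto

lemma path_gdist_from_hd:
  assumes q: "is_path V E q"
  shows "j < length q \<Longrightarrow> d (q ! 0) (q ! j) = j"
proof (induction j)
  case (Suc j)
  let ?F = "E - {{q ! Suc j, q ! j}}"
  have e: "{q ! Suc j, q ! j} \<in> E"
    using is_path_edge[OF q Suc.prems] by (simp add: insert_commute)
  have reach: "(q ! 0, q ! i) \<in> (adj_rel ?F)\<^sup>*" if "i \<le> j" for i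
    using that
  proof (induction i)
    case (Suc i)
    have "q ! Suc j \<noteq> q ! i" "q ! Suc j \<noteq> q ! Suc i"
      using q Suc.prems \<open>Suc j < length q\<close> unfolding is_path_def by (simp_all add: nth_eq_iff_index_eq)
    then have "(q ! i, q ! Suc i) \<in> adj_rel ?F"
      using is_path_edge[OF q, of i] Suc.prems \<open>Suc j < length q\<close> by (auto simp: doubleton_eq_iff)
    then show ?case
      using Suc.IH Suc.prems by (meson Suc_leD rtrancl_into_rtrancl)
  qed simp
  have "(q ! j, q ! 0) \<in> (adj_rel ?F)\<^sup>*"
    using adj_rel_rtrancl_sym[OF reach[OF order_refl]] .
  moreover have "q ! 0 \<in> V"
    using Suc.prems by (intro is_path_nth[OF q]) auto
  ultimately have "q ! 0 \<in> branch (q ! Suc j) (q ! j)"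
    unfolding comp_minus_def by simp
  then show ?case
    using gdist_in_branch[OF e] Suc by (simp add: gdist_sym)
qed simp

lemma path_gdist:
  assumes q: "is_path V E q" and "i \<le> j" "j < length q"
  shows "d (q ! i) (q ! j) = j - i"
  using path_gdist_from_hd[OF is_path_drop[OF q], of i "j - i"] assms by simp

lemma gdist_le_diameter:
  assumes P: "longest_path V E P" and "a \<in> V" "b \<in> V"
  shows "d a b \<le> length P - 1"
proof -
  obtain q where q: "is_path V E q" "hd q = a" "last q = b"
    using path_exists assms(2,3) by blast
  then have "q \<noteq> []"
    unfolding is_path_def by simp
  then have "d a b = length q - 1"
    using path_gdist[OF q(1), of 0 "length q - 1"] q by (simp add: hd_conv_nth last_conv_nth)
  moreover have "length q \<le> length P"
    using P q unfolding longest_path_def by simp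
  ultimately show ?thesis
    by linarith
qed

definition gate_at :: "'a list \<Rightarrow> 'a \<Rightarrow> nat \<Rightarrow> bool" where
  "gate_at P z i \<longleftrightarrow> i < length P \<and> (\<forall>j<length P. d z (P ! j) = d z (P ! i) + d (P ! i) (P ! j))"

lemma gate_atD:
  "gate_at P z i \<Longrightarrow> j < length P \<Longrightarrow> d z (P ! j) = d z (P ! i) + d (P ! i) (P ! j)"
  unfolding gate_at_def by blast

lemma gate_at_less: "gate_at P z i \<Longrightarrow> i < length P"
  unfolding gate_at_def by blast

lemma gate_exists:
  assumes P: "is_path V E P" and z: "z \<in> V"
  shows "\<exists>i. gate_at P z i"
proof -
  \<comment> \<open>A vertex of P nearest to z is its gate: z lies on the near side of the first edge from it towards any other vertex of P.\<close>
  obtain i where i: "i < length P" "\<And>j. j < length P \<Longrightarrow> d z (P ! i) \<le> d z (P ! j)"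
    using ex_has_least_nat[of "\<lambda>i. i < length P" 0 "\<lambda>i. d z (P ! i)"] P unfolding is_path_def by auto
  have "d z (P ! j) = d z (P ! i) + d (P ! i) (P ! j)" if j: "j < length P" "j \<noteq> i" for j
  proof -
    define i' where "i' = (if i < j then Suc i else i - 1)"
    have i': "i' < length P" "{P ! i, P ! i'} \<in> E"
      using j i(1) is_path_edge[OF P, of i] is_path_edge[OF P, of "i - 1"]
      by (auto simp: i'_def insert_commute)
    have step: "d (P ! i) (P ! j) = Suc (d (P ! i') (P ! j))"
      using j i(1) path_gdist[OF P, of i j] path_gdist[OF P, of i' j]
        path_gdist[OF P, of j i] path_gdist[OF P, of j i']
      by (auto simp: i'_def gdist_sym)
    have "d (P ! i) z < d (P ! i') z"
      using gdist_edge_cases[OF i'(2) z] i(2)[OF i'(1)] by (auto simp: gdist_sym)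
    then have "d z (P ! j) = d z (P ! i) + 1 + d (P ! i') (P ! j)"
      using gdist_through_edge[OF i'(2) z is_path_nth[OF P j(1)]] step by simp
    then show ?thesis
      using step by simp
  qed
  then show ?thesis
    using i(1) unfolding gate_at_def by (metis add_0_right gdist_self)
qed

definition on_side :: "'a \<Rightarrow> 'a \<Rightarrow> 'a set \<Rightarrow> bool" where
  "on_side u v S \<longleftrightarrow> (\<forall>z\<in>S. d u z < d v z)"

lemma path_on_side:
  assumes Q: "is_path V E Q" and e: "{a, b} \<in> E"
    and hd: "d a (hd Q) < d b (hd Q)" and last: "d a (last Q) < d b (last Q)"
  shows "on_side a b (set Q)"
  unfolding on_side_def
proof
  fix z assume "z \<in> set Q"
  then obtain i where i: "i < length Q" "z = Q ! i"
    by (auto simp: in_set_conv_nth)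
  let ?m = "length Q - 1"
  have Qne: "Q \<noteq> []"
    using i by auto
  have V: "hd Q \<in> V" "last Q \<in> V" "z \<in> V" "a \<in> V"
    using Q Qne i edge_in_V[OF e] unfolding is_path_def by auto
  have pos: "d (hd Q) z = i" "d z (last Q) = ?m - i" "d (hd Q) (last Q) = ?m"
    using path_gdist[OF Q, of 0 i] path_gdist[OF Q, of i ?m] path_gdist[OF Q, of 0 ?m] i Qne
    by (auto simp: hd_conv_nth last_conv_nth)
  show "d a z < d b z"
  proof (rule ccontr)
    assume "\<not> d a z < d b z"
    then have "d b z < d a z"
      using gdist_edge_cases[OF e V(3)] by auto
    then have "d (hd Q) z = d (hd Q) a + 1 + d b z" "d (last Q) z = d (last Q) a + 1 + d b z"
      using gdist_through_edge[OF e] hd last V by auto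
    moreover have "d (hd Q) (last Q) \<le> d (hd Q) a + d a (last Q)"
      using gdist_triangle V by blast
    ultimately show False
      using pos i by (simp add: gdist_sym)
  qed
qed

lemma path_leaving_branch:
  assumes Q: "is_path V E Q" and e: "{u, v} \<in> E" and hd: "hd Q \<in> branch u v"
    and j: "j < length Q" "Q ! j \<notin> branch u v"
  shows "\<exists>i<j. Q ! i = v \<and> Q ! Suc i = u"
proof -
  have "Q ! 0 \<in> branch u v"
    using hd j(1) by (cases Q) auto
  then obtain i where i: "i < j" "Q ! i \<in> branch u v" "Q ! Suc i \<notin> branch u v"
    using exists_exit_step[of 0 j "\<lambda>i. Q ! i \<in> branch u v"] j(2) by auto
  then show ?thesis
    using edge_leaving_branch[OF e i(2) is_path_nth[OF Q] i(3) is_path_edge[OF Q]] j(1) by auto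
qed

lemma path_stays_in_branch:
  assumes Q: "is_path V E Q" and e: "{u, v} \<in> E" and off: "{u, v} \<notin> path_edges Q"
    and hd: "hd Q \<in> branch u v"
  shows "set Q \<subseteq> branch u v"
proof
  fix z assume "z \<in> set Q"
  then obtain j where j: "j < length Q" "z = Q ! j"
    by (auto simp: in_set_conv_nth)
  show "z \<in> branch u v"
  proof (rule ccontr)
    assume "z \<notin> branch u v"
    then obtain i where "i < j" "Q ! i = v" "Q ! Suc i = u"
      using path_leaving_branch[OF Q e hd j(1)] j(2) by auto
    then have "{u, v} = {Q ! i, Q ! Suc i}" "Suc i < length Q"
      using j(1) by (auto simp: insert_commute)
    then have "{u, v} \<in> path_edges Q"
      unfolding path_edges_def by blast
    then show False
      using off by simp
  qed
qed

lemma path_side_cases: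
  assumes Q: "is_path V E Q" and e: "{u, v} \<in> E" and off: "{u, v} \<notin> path_edges Q"
  shows "on_side u v (set Q) \<or> on_side v u (set Q)"
proof -
  have e': "{v, u} \<in> E" "{v, u} \<notin> path_edges Q"
    using e off by (simp_all add: insert_commute)
  have "hd Q \<in> V"
    using path_ends_in_V[OF Q] by simp
  then have "set Q \<subseteq> branch u v \<or> set Q \<subseteq> branch v u"
    using branches_cover[OF e] path_stays_in_branch[OF Q e off] path_stays_in_branch[OF Q e'] by blast
  then show ?thesis
    using mem_branch_iff[OF e] mem_branch_iff[OF e'(1)] branch_subset_V unfolding on_side_def by blast
qed

lemma dist_to_path_attained:
  assumes "Q \<noteq> []"
  shows "\<exists>z\<in>set Q. dist_to_path E u Q = d u z"
proof -
  obtain z where "z \<in> set Q"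
    using assms by (meson list.set_sel(1))
  then have "\<exists>n. \<exists>x\<in>set Q. d u x = n"
    by blast
  then have "\<exists>x\<in>set Q. d u x = (LEAST n. \<exists>x\<in>set Q. d u x = n)"
    by (rule LeastI_ex)
  then show ?thesis
    unfolding dist_to_path_def by metis
qed

lemma dist_to_path_le: "z \<in> set Q \<Longrightarrow> dist_to_path E u Q \<le> d u z"
  unfolding dist_to_path_def by (rule Least_le) blast

lemma dist_to_path_less_iff:
  assumes Q: "is_path V E Q" and e: "{u, v} \<in> E" and off: "{u, v} \<notin> path_edges Q"
  shows "dist_to_path E u Q < dist_to_path E v Q \<longleftrightarrow> on_side u v (set Q)"
proof -
  have less: "dist_to_path E a Q < dist_to_path E b Q" if "on_side a b (set Q)" for a b
  proof -
    obtain z where "z \<in> set Q" "dist_to_path E b Q = d b z"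
      using dist_to_path_attained Q unfolding is_path_def by blast
    then show ?thesis
      using dist_to_path_le[of z Q a] that unfolding on_side_def by fastforce
  qed
  show ?thesis
    using path_side_cases[OF Q e off] less[of u v] less[of v u] by auto
qed

definition deep_arcs :: "nat \<Rightarrow> 'a set \<Rightarrow> ('a \<times> 'a) set" where
  "deep_arcs k S = {(u, v). {u, v} \<in> E \<and> on_side u v S \<and> (\<exists>w\<in>V. d v w < d u w \<and> k \<le> d u w)}"

lemma finite_deep_arcs: "finite (deep_arcs k S)"
proof -
  have "deep_arcs k S \<subseteq> V \<times> V"
    using edge_in_V unfolding deep_arcs_def by auto
  then show ?thesis
    using finite_V finite_subset by blast
qed

lemma deep_arc_head_notin: "(u, v) \<in> deep_arcs k S \<Longrightarrow> v \<notin> S"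
  unfolding deep_arcs_def on_side_def by fastforce

lemma deep_arcs_antisym: "z \<in> S \<Longrightarrow> (u, v) \<in> deep_arcs k S \<Longrightarrow> (v, u) \<notin> deep_arcs k S"
  unfolding deep_arcs_def on_side_def by fastforce

lemma dkP_eq_deep_arc:
  assumes Q: "is_path V E Q" and e: "e \<in> E"
  shows "dkP k V E Q e = (if \<exists>u v. e = {u, v} \<and> (u, v) \<in> deep_arcs k (set Q) then 1 else 0)"
proof (cases "e \<in> path_edges Q")
  case True
  then have "e \<subseteq> set Q"
    unfolding path_edges_def by auto
  then have "\<not> (\<exists>u v. e = {u, v} \<and> (u, v) \<in> deep_arcs k (set Q))"
    using deep_arc_head_notin by blast
  then show ?thesis
    using True unfolding dkP_def by simp
next
  case False
  have "(dist_to_path E u Q < dist_to_path E v Q \<and> (\<exists>w\<in>comp_minus V E e v. k \<le> d u w))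
      \<longleftrightarrow> (u, v) \<in> deep_arcs k (set Q)" if uv: "e = {u, v}" for u v
  proof -
    have "{u, v} \<in> E" "{u, v} \<notin> path_edges Q"
      using e False uv by auto
    then show ?thesis
      using dist_to_path_less_iff[OF Q] mem_branch_iff branch_subset_V uv
      unfolding deep_arcs_def by blast
  qed
  then have "(\<exists>u v. e = {u, v} \<and> dist_to_path E u Q < dist_to_path E v Q
        \<and> (\<exists>w\<in>comp_minus V E e v. k \<le> d u w))
      \<longleftrightarrow> (\<exists>u v. e = {u, v} \<and> (u, v) \<in> deep_arcs k (set Q))"
    by (intro ex_cong1 conj_cong refl)
  then show ?thesis
    using False unfolding dkP_def by simp
qed

lemma sum_dkP_eq_card_deep_arcs:
  assumes Q: "is_path V E Q"
  shows "(\<Sum>e\<in>E. dkP k V E Q e) = card (deep_arcs k (set Q))"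
proof -
  let ?D = "deep_arcs k (set Q)"
  let ?deep = "\<lambda>e. \<exists>u v. e = {u, v} \<and> (u, v) \<in> ?D"
  have "(\<Sum>e\<in>E. dkP k V E Q e) = (\<Sum>e\<in>E. if ?deep e then 1 else 0)"
    using dkP_eq_deep_arc[OF Q] by (intro sum.cong) auto
  also have "\<dots> = card {e\<in>E. ?deep e}"
    using sum.inter_filter[OF finite_E, of "\<lambda>_. 1 :: nat" ?deep] by simp
  also have "{e\<in>E. ?deep e} = (\<lambda>(u, v). {u, v}) ` ?D"
    unfolding deep_arcs_def by auto
  also have "card \<dots> = card ?D"
  proof (rule card_image, rule inj_onI, clarify)
    fix a b c e
    assume "(a, b) \<in> ?D" "(c, e) \<in> ?D" "{a, b} = {c, e}"
    moreover have "hd Q \<in> set Q"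
      using Q unfolding is_path_def by simp
    ultimately show "a = c \<and> b = e"
      using deep_arcs_antisym by (auto simp: doubleton_eq_iff)
  qed
  finally show ?thesis .
qed

lemma longest_path_rev: "longest_path V E P \<Longrightarrow> longest_path V E (rev P)"
  unfolding longest_path_def using is_path_rev by auto

lemma gate_at_rev:
  assumes "gate_at P z i"
  shows "gate_at (rev P) z (length P - 1 - i)"
proof -
  have i: "i < length P"
    using gate_at_less[OF assms] .
  then have "length P - Suc (length P - 1 - i) = i"
    by simp
  then have rev_i: "rev P ! (length P - 1 - i) = P ! i"
    using i by (simp add: rev_nth)
  show ?thesis
    unfolding gate_at_def
  proof (intro conjI allI impI)
    fix j assume j: "j < length (rev P)"
    then have "d z (P ! (length P - Suc j)) = d z (P ! i) + d (P ! i) (P ! (length P - Suc j))"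
      using gate_atD[OF assms] by simp
    then show "d z (rev P ! j) = d z (rev P ! (length P - 1 - i)) + d (rev P ! (length P - 1 - i)) (rev P ! j)"
      using j rev_i by (simp add: rev_nth)
  qed (use i in simp)
qed

lemma deep_arc_end_bound:
  assumes P: "longest_path V E P" and uv: "(u, v) \<in> deep_arcs k S" and z: "z \<in> S" "z \<in> V"
  shows "d z u + k \<le> length P - 1"
proof -
  obtain w where w: "w \<in> V" "d v w < d u w" "k \<le> d u w"
    and e: "{u, v} \<in> E" and side: "d u z < d v z"
    using uv z unfolding deep_arcs_def on_side_def by auto
  have "d u w = Suc (d v w)"
    using gdist_edge_cases[OF e w(1)] w(2) by auto
  moreover have "d z w = d z u + 1 + d v w"
    using gdist_through_edge[OF e z(2) w(1) side w(2)] .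
  moreover have "d z w \<le> length P - 1"
    using gdist_le_diameter[OF P z(2) w(1)] .
  ultimately show ?thesis
    using w(3) by linarith
qed

lemma deep_arc_far_from_hd:
  assumes P: "longest_path V E P" and uv: "(u, v) \<in> deep_arcs k (set P)"
  shows "k \<le> d u (P ! 0)"
proof -
  let ?m = "length P - 1"
  have Pp: "is_path V E P"
    using P unfolding longest_path_def by simp
  then have ends: "P ! 0 \<in> set P" "P ! ?m \<in> set P" "P ! 0 \<in> V" "P ! ?m \<in> V"
    unfolding is_path_def by auto
  have uV: "u \<in> V"
    using uv edge_in_V unfolding deep_arcs_def by auto
  have "?m < length P"
    using Pp unfolding is_path_def by simp
  then have "?m = d (P ! 0) (P ! ?m)"
    using path_gdist[OF Pp, of 0 ?m] by simp
  also have "\<dots> \<le> d (P ! 0) u + d u (P ! ?m)"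
    using gdist_triangle ends uV by blast
  finally show ?thesis
    using deep_arc_end_bound[OF P uv ends(2,4)] by (simp add: gdist_sym)
qed

lemma deep_arc_flip:
  assumes P: "longest_path V E P" and uv: "(u, v) \<in> deep_arcs k (set P)" and side: "on_side v u S"
  shows "(v, u) \<in> deep_arcs k S"
proof -
  have "P ! 0 \<in> set P" "P ! 0 \<in> V"
    using P unfolding longest_path_def is_path_def by auto
  moreover have "{u, v} \<in> E" "on_side u v (set P)"
    using uv unfolding deep_arcs_def by auto
  ultimately have "P ! 0 \<in> V \<and> d u (P ! 0) < d v (P ! 0) \<and> k \<le> d v (P ! 0)"
    using deep_arc_far_from_hd[OF P uv] unfolding on_side_def by fastforce
  then show ?thesis
    using side \<open>{u, v} \<in> E\<close> unfolding deep_arcs_def by (auto simp: insert_commute)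
qed

lemma gate_transfer:
  assumes P: "is_path V E P" and g: "gate_at P z i" and e: "{u, v} \<in> E"
    and side: "on_side u v (set P)" and z: "z \<in> V" "d v z < d u z"
  shows "gate_at P u i \<and> d z (P ! i) = d z u + d u (P ! i)"
proof -
  have split: "d z (P ! j) = d z u + d u (P ! j)" if j: "j < length P" for j
  proof -
    have "P ! j \<in> V" "d u (P ! j) < d v (P ! j)"
      using side is_path_nth[OF P j] j unfolding on_side_def by auto
    then have "d (P ! j) z = d (P ! j) u + 1 + d v z"
      using gdist_through_edge[OF e _ z(1) _ z(2)] by blast
    moreover have "d u z = Suc (d v z)"
      using gdist_edge_cases[OF e z(1)] z(2) by auto
    ultimately show ?thesis
      by (simp add: gdist_sym)
  qed
  have "d u (P ! j) = d u (P ! i) + d (P ! i) (P ! j)" if j: "j < length P" for j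
    using split[OF j] split[OF gate_at_less[OF g]] gate_atD[OF g j] by linarith
  then show ?thesis
    using gate_at_less[OF g] split[OF gate_at_less[OF g]] unfolding gate_at_def by blast
qed

lemma gate_depth_bound:
  assumes P: "longest_path V E P" and uv: "(u, v) \<in> deep_arcs k (set P)" and g: "gate_at P u i"
  shows "d u (P ! i) + k \<le> i"
proof -
  let ?m = "length P - 1"
  have Pp: "is_path V E P"
    using P unfolding longest_path_def by simp
  have i: "i \<le> ?m" "?m < length P"
    using gate_at_less[OF g] by auto
  have "d u (P ! ?m) = d u (P ! i) + (?m - i)"
    using gate_atD[OF g i(2)] path_gdist[OF Pp i] by simp
  moreover have "d (P ! ?m) u + k \<le> ?m"
    using deep_arc_end_bound[OF P uv nth_mem[OF i(2)] is_path_nth[OF Pp i(2)]] .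
  ultimately show ?thesis
    using i by (simp add: gdist_sym)
qed

definition backward_arcs :: "'a list \<Rightarrow> ('a \<times> 'a) set" where
  "backward_arcs P = {(P ! Suc j, P ! j) | j. Suc j < length P}"

lemma backward_arcs_subset: "backward_arcs P \<subseteq> set P \<times> set P"
  unfolding backward_arcs_def by auto

lemma backward_arcs_rev_disjoint:
  assumes "distinct P"
  shows "backward_arcs P \<inter> backward_arcs (rev P) = {}"
proof -
  have False if "Suc i < length P" "Suc j < length P" "P ! Suc i = rev P ! Suc j" "P ! i = rev P ! j" for i j
    using that assms by (simp add: rev_nth nth_eq_iff_index_eq)
  then show ?thesis
    unfolding backward_arcs_def by auto
qed

lemma backward_arc_deep:
  assumes P: "is_path V E P" and Q: "is_path V E Q"
    and gx: "gate_at P (hd Q) ix" and gy: "gate_at P (last Q) iy"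
    and j: "k \<le> Suc j" "Suc j \<le> ix" "Suc j \<le> iy"
  shows "(P ! Suc j, P ! j) \<in> deep_arcs k (set Q)"
proof -
  have len: "Suc j < length P"
    using gate_at_less[OF gx] j by simp
  have e: "{P ! Suc j, P ! j} \<in> E"
    using is_path_edge[OF P len] by (simp add: insert_commute)
  have away: "d (P ! Suc j) z < d (P ! j) z" if "gate_at P z i" "Suc j \<le> i" for z i
  proof -
    have "d z (P ! Suc j) = d z (P ! i) + (i - Suc j)" "d z (P ! j) = d z (P ! i) + (i - j)"
      using that gate_atD[OF that(1), of "Suc j"] gate_atD[OF that(1), of j] gate_at_less[OF that(1)]
        path_gdist[OF P, of "Suc j" i] path_gdist[OF P, of j i]
      by (simp_all add: gdist_sym)
    then show ?thesis
      using that by (simp add: gdist_sym)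
  qed
  have "on_side (P ! Suc j) (P ! j) (set Q)"
    using path_on_side[OF Q e] away[OF gx j(2)] away[OF gy j(3)] by blast
  moreover have "d (P ! j) (P ! 0) < d (P ! Suc j) (P ! 0)" "k \<le> d (P ! Suc j) (P ! 0)"
    using path_gdist[OF P, of 0 j] path_gdist[OF P, of 0 "Suc j"] len j(1) by (simp_all add: gdist_sym)
  moreover have "P ! 0 \<in> V"
    using is_path_nth[OF P, of 0] len by (cases P) auto
  ultimately show ?thesis
    using e unfolding deep_arcs_def by blast
qed

definition inbound_arcs :: "nat \<Rightarrow> 'a set \<Rightarrow> 'a list \<Rightarrow> ('a \<times> 'a) set" where
  "inbound_arcs k S Q =
     {(u, v) \<in> deep_arcs k S. d v (hd Q) < d u (hd Q) \<and> d u (last Q) < d v (last Q)}"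

lemma finite_inbound_arcs: "finite (inbound_arcs k S Q)"
proof -
  have "inbound_arcs k S Q \<subseteq> deep_arcs k S"
    unfolding inbound_arcs_def by auto
  then show ?thesis
    using finite_deep_arcs finite_subset by blast
qed

lemma inbound_arc_on_path:
  assumes Q: "is_path V E Q" and uv: "(u, v) \<in> inbound_arcs k S Q"
  shows "\<exists>i. Suc i < length Q \<and> Q ! i = v \<and> Q ! Suc i = u"
proof -
  have e: "{u, v} \<in> E"
    using uv unfolding inbound_arcs_def deep_arcs_def by auto
  have Qne: "Q \<noteq> []"
    using Q unfolding is_path_def by simp
  have "hd Q \<in> branch u v" "Q ! (length Q - 1) \<notin> branch u v"
    using uv mem_branch_iff[OF e] path_ends_in_V[OF Q] Qne
    unfolding inbound_arcs_def by (auto simp: last_conv_nth)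
  moreover have "length Q - 1 < length Q"
    using Qne by simp
  ultimately obtain i where "i < length Q - 1" "Q ! i = v" "Q ! Suc i = u"
    using path_leaving_branch[OF Q e] by blast
  then show ?thesis
    by (intro exI[of _ i]) simp
qed

lemma crossing_arc_inbound:
  assumes Q: "is_path V E Q" and uv: "(u, v) \<in> deep_arcs k S"
    and not_u: "\<not> on_side u v (set Q)" and not_v: "\<not> on_side v u (set Q)"
  shows "(u, v) \<in> inbound_arcs k S Q \<union> inbound_arcs k S (rev Q)"
proof -
  have e: "{u, v} \<in> E" and e': "{v, u} \<in> E"
    using uv unfolding deep_arcs_def by (auto simp: insert_commute)
  have "\<not> (d u (hd Q) < d v (hd Q) \<and> d u (last Q) < d v (last Q))"
    using path_on_side[OF Q e] not_u by blast
  moreover have "\<not> (d v (hd Q) < d u (hd Q) \<and> d v (last Q) < d u (last Q))"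
    using path_on_side[OF Q e'] not_v by blast
  moreover have "d u (hd Q) \<noteq> d v (hd Q)" "d u (last Q) \<noteq> d v (last Q)"
    using gdist_edge_cases[OF e] path_ends_in_V[OF Q] by force+
  ultimately show ?thesis
    using uv unfolding inbound_arcs_def by (auto simp: hd_rev last_rev)
qed

lemma inbound_arc_depth:
  assumes P: "longest_path V E P" and Q: "is_path V E Q" and gx: "gate_at P (hd Q) ix"
    and uv: "(u, v) \<in> inbound_arcs k (set P) Q"
  shows "d (hd Q) (P ! ix) = d (hd Q) u + d u (P ! ix) \<and> d u (P ! ix) + k \<le> ix"
proof -
  have deep: "(u, v) \<in> deep_arcs k (set P)" and hx: "d v (hd Q) < d u (hd Q)"
    using uv unfolding inbound_arcs_def by auto
  then have "{u, v} \<in> E" "on_side u v (set P)"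
    unfolding deep_arcs_def by auto
  moreover have "is_path V E P"
    using P unfolding longest_path_def by simp
  ultimately have "gate_at P u ix \<and> d (hd Q) (P ! ix) = d (hd Q) u + d u (P ! ix)"
    using gate_transfer[OF _ gx _ _ _ hx] path_ends_in_V[OF Q] by blast
  then show ?thesis
    using gate_depth_bound[OF P deep] by blast
qed

lemma inbound_arc_image:
  assumes P: "longest_path V E P" and Q: "is_path V E Q"
    and gx: "gate_at P (hd Q) ix" and gy: "gate_at P (last Q) iy" and ixy: "ix \<le> iy" and k: "1 \<le> k"
    and uv: "(u, v) \<in> inbound_arcs k (set P) Q"
  shows "(P ! (ix - d u (P ! ix)), P ! (ix - d u (P ! ix) - 1)) \<in> deep_arcs k (set Q) \<inter> backward_arcs P"
proof -
  define j where "j = ix - d u (P ! ix) - 1"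
  have j: "Suc j = ix - d u (P ! ix)" "k \<le> Suc j" "Suc j \<le> ix" "Suc j \<le> iy"
    using inbound_arc_depth[OF P Q gx uv] k ixy unfolding j_def by auto
  have "(P ! Suc j, P ! j) \<in> deep_arcs k (set Q)"
    using backward_arc_deep[OF _ Q gx gy j(2-4)] P unfolding longest_path_def by blast
  moreover have "(P ! Suc j, P ! j) \<in> backward_arcs P"
    using j(3) gate_at_less[OF gx] unfolding backward_arcs_def by auto
  ultimately show ?thesis
    using j(1) by (simp add: j_def)
qed

lemma inbound_arc_eqI:
  assumes P: "longest_path V E P" and Q: "is_path V E Q" and gx: "gate_at P (hd Q) ix"
    and a1: "(u1, v1) \<in> inbound_arcs k (set P) Q" and a2: "(u2, v2) \<in> inbound_arcs k (set P) Q"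
    and same_depth: "d u1 (P ! ix) = d u2 (P ! ix)"
  shows "u1 = u2 \<and> v1 = v2"
proof -
  obtain i1 where i1: "Suc i1 < length Q" "Q ! i1 = v1" "Q ! Suc i1 = u1"
    using inbound_arc_on_path[OF Q a1] by blast
  obtain i2 where i2: "Suc i2 < length Q" "Q ! i2 = v2" "Q ! Suc i2 = u2"
    using inbound_arc_on_path[OF Q a2] by blast
  have "hd Q = Q ! 0"
    using i1 by (cases Q) auto
  then have "d (hd Q) u1 = Suc i1" "d (hd Q) u2 = Suc i2"
    using path_gdist[OF Q, of 0 "Suc i1"] path_gdist[OF Q, of 0 "Suc i2"] i1 i2 by auto
  moreover have "d (hd Q) u1 = d (hd Q) u2"
    using inbound_arc_depth[OF P Q gx a1] inbound_arc_depth[OF P Q gx a2] same_depth by linarith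
  ultimately show ?thesis
    using i1 i2 by simp
qed

lemma card_inbound_arcs_le:
  assumes P: "longest_path V E P" and Q: "is_path V E Q"
    and gx: "gate_at P (hd Q) ix" and gy: "gate_at P (last Q) iy" and ixy: "ix \<le> iy" and k: "1 \<le> k"
  shows "card (inbound_arcs k (set P) Q) \<le> card (deep_arcs k (set Q) \<inter> backward_arcs P)"
proof -
  let ?I = "inbound_arcs k (set P) Q"
  \<comment> \<open>An inbound arc at distance l from the gate P ! ix goes to the arc of P at distance l from ix, pointing away from it.\<close>
  define h :: "'a \<times> 'a \<Rightarrow> 'a \<times> 'a"
    where "h = (\<lambda>(u, v). (P ! (ix - d u (P ! ix)), P ! (ix - d u (P ! ix) - 1)))"
  have "h ` ?I \<subseteq> deep_arcs k (set Q) \<inter> backward_arcs P"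
    using inbound_arc_image[OF P Q gx gy ixy k] unfolding h_def by auto
  moreover have "inj_on h ?I"
  proof (rule inj_onI, clarify)
    fix u1 v1 u2 v2
    assume a1: "(u1, v1) \<in> ?I" and a2: "(u2, v2) \<in> ?I" and "h (u1, v1) = h (u2, v2)"
    then have "P ! (ix - d u1 (P ! ix)) = P ! (ix - d u2 (P ! ix))"
      unfolding h_def by simp
    moreover have "distinct P" "ix < length P"
      using P gate_at_less[OF gx] unfolding longest_path_def is_path_def by auto
    ultimately have "ix - d u1 (P ! ix) = ix - d u2 (P ! ix)"
      by (simp add: nth_eq_iff_index_eq)
    then have "d u1 (P ! ix) = d u2 (P ! ix)"
      using inbound_arc_depth[OF P Q gx a1] inbound_arc_depth[OF P Q gx a2] by linarith
    then show "u1 = u2 \<and> v1 = v2"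
      by (rule inbound_arc_eqI[OF P Q gx a1 a2])
  qed
  moreover have "finite (deep_arcs k (set Q) \<inter> backward_arcs P)"
    using finite_deep_arcs by blast
  ultimately show ?thesis
    using card_inj_on_le by blast
qed

lemma card_crossing_arcs_le:
  assumes P: "longest_path V E P" and Q: "is_path V E Q" and k: "1 \<le> k"
  shows "card (inbound_arcs k (set P) Q \<union> inbound_arcs k (set P) (rev Q))
    \<le> card (deep_arcs k (set Q) \<inter> set P \<times> set P)"
proof -
  have ordered: "card (inbound_arcs k (set P) R \<union> inbound_arcs k (set P) (rev R))
      \<le> card (deep_arcs k (set R) \<inter> set P \<times> set P)"
    if R: "is_path V E R" and g: "gate_at P (hd R) i" "gate_at P (last R) j" "i \<le> j" for R i j
  proof -
    let ?D = "deep_arcs k (set R)"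
    let ?m = "length P - 1"
    have "card (inbound_arcs k (set P) R) \<le> card (?D \<inter> backward_arcs P)"
      using card_inbound_arcs_le[OF P R g k] .
    \<comment> \<open>In rev P the gates come in the opposite order, and its backward arcs are the forward arcs of P.\<close>
    moreover have "card (inbound_arcs k (set P) (rev R)) \<le> card (?D \<inter> backward_arcs (rev P))"
      using card_inbound_arcs_le[OF longest_path_rev[OF P] is_path_rev[OF R], of "?m - j" "?m - i" k]
        gate_at_rev[OF g(2)] gate_at_rev[OF g(1)] g(3) k by (simp add: hd_rev last_rev)
    moreover have "card (?D \<inter> backward_arcs P) + card (?D \<inter> backward_arcs (rev P))
        = card (?D \<inter> backward_arcs P \<union> ?D \<inter> backward_arcs (rev P))"
      using backward_arcs_rev_disjoint[of P] P finite_deep_arcs unfolding longest_path_def is_path_def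
      by (intro card_Un_disjoint[symmetric]) auto
    moreover have "\<dots> \<le> card (?D \<inter> set P \<times> set P)"
      using backward_arcs_subset[of P] backward_arcs_subset[of "rev P"] finite_deep_arcs
      by (intro card_mono) auto
    ultimately show ?thesis
      using card_Un_le[of "inbound_arcs k (set P) R" "inbound_arcs k (set P) (rev R)"] by linarith
  qed
  obtain i j where g: "gate_at P (hd Q) i" "gate_at P (last Q) j"
    using gate_exists P Q path_ends_in_V unfolding longest_path_def by metis
  show ?thesis
  proof (cases "i \<le> j")
    case True
    show ?thesis
      by (rule ordered[OF Q g True])
  next
    case False
    then show ?thesis
      using ordered[OF is_path_rev[OF Q], of j i] g by (simp add: hd_rev last_rev Un_commute)
  qed
qed

lemma card_uncrossed_deep_arcs_le:
  assumes P: "longest_path V E P"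
  shows "card {(u, v) \<in> deep_arcs k (set P). on_side u v S}
      + card {(u, v) \<in> deep_arcs k (set P). on_side v u S}
      + card (deep_arcs k S \<inter> set P \<times> set P) \<le> card (deep_arcs k S)"
proof -
  let ?same = "{(u, v) \<in> deep_arcs k (set P). on_side u v S}"
  let ?flipped = "(\<lambda>(u, v). (v, u)) ` {(u, v) \<in> deep_arcs k (set P). on_side v u S}"
  let ?Z = "deep_arcs k S \<inter> set P \<times> set P"
  have "?same \<subseteq> deep_arcs k (set P)" "{(u, v) \<in> deep_arcs k (set P). on_side v u S} \<subseteq> deep_arcs k (set P)"
    by auto
  then have fin: "finite ?same" "finite ?flipped" "finite ?Z"
    using finite_deep_arcs finite_subset by blast+
  have "hd P \<in> set P"
    using P unfolding longest_path_def is_path_def by simp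
  then have "?same \<inter> ?flipped = {}"
    using deep_arcs_antisym by auto
  then have "card (?same \<union> ?flipped) = card ?same + card {(u, v) \<in> deep_arcs k (set P). on_side v u S}"
    using fin by (simp add: card_Un_disjoint card_image swap_inj_on)
  moreover have "(?same \<union> ?flipped) \<inter> ?Z = {}"
    using deep_arc_head_notin by auto
  then have "card (?same \<union> ?flipped \<union> ?Z) = card (?same \<union> ?flipped) + card ?Z"
    using fin by (simp add: card_Un_disjoint)
  moreover have "card (?same \<union> ?flipped \<union> ?Z) \<le> card (deep_arcs k S)"
  proof -
    have "?same \<subseteq> deep_arcs k S"
      unfolding deep_arcs_def by auto
    moreover have "?flipped \<subseteq> deep_arcs k S"
      using deep_arc_flip[OF P] by auto
    ultimately show ?thesis
      using finite_deep_arcs by (intro card_mono) auto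
  qed
  ultimately show ?thesis
    by linarith
qed

lemma card_deep_arcs_le_longest_path:
  assumes P: "longest_path V E P" and Q: "is_path V E Q" and k: "1 \<le> k"
  shows "card (deep_arcs k (set P)) \<le> card (deep_arcs k (set Q))"
proof -
  let ?A = "deep_arcs k (set P)"
  let ?same = "{(u, v) \<in> ?A. on_side u v (set Q)}" and ?flipped = "{(u, v) \<in> ?A. on_side v u (set Q)}"
  let ?crossing = "inbound_arcs k (set P) Q \<union> inbound_arcs k (set P) (rev Q)"
  have "?A \<subseteq> ?same \<union> ?flipped \<union> ?crossing"
    using crossing_arc_inbound[OF Q] by blast
  moreover have "finite (?same \<union> ?flipped)"
    by (rule finite_subset[OF _ finite_deep_arcs[of k "set P"]]) auto
  then have "finite (?same \<union> ?flipped \<union> ?crossing)"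
    using finite_inbound_arcs by blast
  ultimately have "card ?A \<le> card (?same \<union> ?flipped \<union> ?crossing)"
    by (rule card_mono[rotated])
  also have "\<dots> \<le> card ?same + card ?flipped + card ?crossing"
    using card_Un_le[of "?same \<union> ?flipped" ?crossing] card_Un_le[of ?same ?flipped] by linarith
  finally show ?thesis
    using card_crossing_arcs_le[OF P Q k] card_uncrossed_deep_arcs_le[OF P, of k "set Q"] by linarith
qed

lemma rtrancl_exits:
  assumes "(a, b) \<in> R\<^sup>*" "a \<in> Z" "b \<notin> Z"
  shows "\<exists>c c'. (c, c') \<in> R \<and> c \<in> Z \<and> c' \<notin> Z"
  using assms by (induction rule: rtrancl_induct) auto

lemma connected_on_meets_branches:
  assumes S: "connected_on E S" and e: "{u, v} \<in> E"
    and a: "a \<in> S" "a \<in> branch u v" and b: "b \<in> S" "b \<notin> branch u v"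
  shows "u \<in> S \<and> v \<in> S"
proof -
  have "(a, b) \<in> (adj_rel E \<inter> S \<times> S)\<^sup>*"
    using S a(1) b(1) unfolding connected_on_def by blast
  then obtain c c' where c: "{c, c'} \<in> E" "c \<in> S" "c' \<in> S" "c \<in> branch u v" "c' \<notin> branch u v"
    using rtrancl_exits[OF _ a(2) b(2)] by fastforce
  then have "c = v \<and> c' = u"
    using edge_leaving_branch[OF e] edge_in_V by blast
  then show ?thesis
    using c by simp
qed

lemma connected_on_gdist_le:
  assumes S: "connected_on E S" "finite S" "S \<subseteq> V" and ab: "a \<in> S" "b \<in> S"
  shows "d a b \<le> card S - 1"
proof -
  have "(a, b) \<in> (adj_rel E \<inter> S \<times> S)\<^sup>*"
    using S ab unfolding connected_on_def by blast
  then obtain p where p: "is_path S E p" "hd p = a" "last p = b"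
    using rtrancl_imp_is_path ab(2) by metis
  then have p_ne: "p \<noteq> []" and "distinct p" "set p \<subseteq> S"
    unfolding is_path_def by auto
  then have "length p \<le> card S"
    using S(2) by (metis card_mono distinct_card)
  moreover have "d a b = length p - 1"
    using path_gdist[OF is_path_mono[OF p(1) S(3) order_refl], of 0 "length p - 1"] p p_ne
    by (simp add: hd_conv_nth last_conv_nth)
  ultimately show ?thesis
    by linarith
qed

lemma connected_on_neighbour:
  assumes S: "connected_on E S" and b: "b \<in> S" and nontriv: "S \<noteq> {b}"
  shows "\<exists>c\<in>S. c \<noteq> b \<and> {c, b} \<in> E"
proof -
  obtain z where z: "z \<in> S" "z \<noteq> b"
    using S b nontriv unfolding connected_on_def by blast
  then have "(b, z) \<in> (adj_rel E \<inter> S \<times> S)\<^sup>*"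
    using S b unfolding connected_on_def by blast
  then obtain c where c: "{b, c} \<in> E" "c \<in> S"
    using z(2) by (metis IntD1 IntD2 adj_rel_iff converse_rtranclE mem_Sigma_iff)
  moreover have "c \<noteq> b" "{c, b} \<in> E"
    using edge_in_V[OF c(1)] c(1) by (auto simp: insert_commute)
  ultimately show ?thesis
    by blast
qed

lemma card_diff_le_card_boundary_edges:
  assumes S: "S \<subseteq> V" "s \<in> S"
  shows "card (V - S) \<le> card {e\<in>E. \<not> e \<subseteq> S}"
proof -
  have "\<exists>c. {z, c} \<in> E \<and> Suc (d c s) = d z s" if "z \<in> V - S" for z
    using exists_closer_neighbour that S by blast
  then obtain next_hop where hop: "\<And>z. z \<in> V - S \<Longrightarrow> {z, next_hop z} \<in> E \<and> Suc (d (next_hop z) s) = d z s"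
    by metis
  have "inj_on (\<lambda>z. {z, next_hop z}) (V - S)"
  proof (rule inj_onI)
    fix z1 z2 assume z: "z1 \<in> V - S" "z2 \<in> V - S" "{z1, next_hop z1} = {z2, next_hop z2}"
    show "z1 = z2"
    proof (rule ccontr)
      assume "z1 \<noteq> z2"
      then have "z1 = next_hop z2" "z2 = next_hop z1"
        using z(3) by (auto simp: doubleton_eq_iff)
      then show False
        using hop[OF z(1)] hop[OF z(2)] by simp
    qed
  qed
  moreover have "(\<lambda>z. {z, next_hop z}) ` (V - S) \<subseteq> {e\<in>E. \<not> e \<subseteq> S}"
    using hop by auto
  moreover have "finite {e\<in>E. \<not> e \<subseteq> S}"
    using finite_E by simp
  ultimately show ?thesis
    using card_inj_on_le by blast
qed

end

locale spanning_walk_tree = tree +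
  fixes k :: nat and cs :: "'a list list"
  assumes spanning: "spanning_walk V E k cs" and k: "1 \<le> k"
begin

abbreviation C :: "nat \<Rightarrow> 'a set" where
  "C t \<equiv> set (cs ! t)"

abbreviation l :: nat where
  "l \<equiv> length cs - 1"

lemma restricted: "restricted_walk V E k cs"
  using spanning unfolding spanning_walk_def by simp

lemma l_less: "l < length cs"
  using restricted unfolding restricted_walk_def by simp

lemma zero_less: "0 < length cs"
  using restricted unfolding restricted_walk_def by simp

lemma config: "t < length cs \<Longrightarrow> is_config V E k (cs ! t)"
  using restricted unfolding restricted_walk_def by simp

lemma C_subset_V: "t < length cs \<Longrightarrow> C t \<subseteq> V"
  using config unfolding is_config_def by simp

lemma card_C: "t < length cs \<Longrightarrow> card (C t) = k"
  using config unfolding is_config_def by (simp add: distinct_card)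

lemma connected_C: "t < length cs \<Longrightarrow> connected_on E (C t)"
  using config unfolding is_config_def by simp

lemma C_nonempty: "t < length cs \<Longrightarrow> C t \<noteq> {}"
  using card_C k by fastforce

lemma covered: "z \<in> V \<Longrightarrow> \<exists>t<length cs. z \<in> C t"
  using spanning unfolding spanning_walk_def by (metis UN_iff in_set_conv_nth)

lemma new_vertex_adjacent:
  assumes t: "Suc t < length cs"
  shows "\<exists>b c. C (Suc t) - C t = {b} \<and> c \<in> C t \<and> {c, b} \<in> E"
proof -
  have adj: "config_adj E (cs ! t) (cs ! Suc t)" and one: "card (C (Suc t) - C t) = 1"
    using restricted t unfolding restricted_walk_def by auto
  obtain b where b: "C (Suc t) - C t = {b}"
    using card_1_singletonE[OF one] by blast
  show ?thesis
  proof (cases "k = 1")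
    case True
    then have "length (cs ! t) = 1" "length (cs ! Suc t) = 1"
      using config[of t] config[OF t] t unfolding is_config_def by auto
    then obtain a a' where aa: "cs ! t = [a]" "cs ! Suc t = [a']"
      by (metis One_nat_def length_0_conv length_Suc_conv)
    have "config_adj E [a] [a']"
      using adj aa by simp
    then have "a = a' \<or> {a, a'} \<in> E"
      unfolding config_adj_def by fastforce
    moreover have "b = a'" "a \<noteq> a'"
      using b aa by auto
    ultimately show ?thesis
      using b aa by (intro exI[of _ a'] exI[of _ a]) simp
  next
    case False
    then have "C (Suc t) \<noteq> {b}"
      using card_C[OF t] by auto
    then obtain c where "c \<in> C (Suc t)" "c \<noteq> b" "{c, b} \<in> E"
      using connected_on_neighbour[OF connected_C[OF t]] b by blast
    then show ?thesis
      using b by blast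
  qed
qed

definition enters :: "nat \<Rightarrow> 'a set \<Rightarrow> bool" where
  "enters t Z \<longleftrightarrow> Suc t < length cs \<and> C t \<inter> Z = {} \<and> C (Suc t) \<inter> Z \<noteq> {}"

definition entry_times :: "'a set \<Rightarrow> nat set" where
  "entry_times e = {t. \<exists>u v. e = {u, v} \<and> enters t (branch u v)}"

lemma entry_times_subset: "entry_times e \<subseteq> {..<l}"
  unfolding entry_times_def enters_def by auto

lemma finite_entry_times: "finite (entry_times e)"
  using entry_times_subset finite_subset by blast

lemma enters_between:
  assumes "a \<le> b" "b < length cs" "C a \<inter> Z = {}" "C b \<inter> Z \<noteq> {}"
  shows "\<exists>t. a \<le> t \<and> t < b \<and> enters t Z"
  using exists_exit_step[of a b "\<lambda>t. C t \<inter> Z = {}"] assms unfolding enters_def by auto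

lemma entry_edge:
  assumes e: "{u, v} \<in> E" and t: "enters t (branch u v)"
    and new: "C (Suc t) - C t = {b}" "c \<in> C t" "{c, b} \<in> E"
  shows "{u, v} = {c, b}"
proof -
  have st: "Suc t < length cs"
    using t unfolding enters_def by simp
  obtain z where z: "z \<in> C (Suc t)" "z \<in> branch u v" "z \<notin> C t"
    using t unfolding enters_def by auto
  then have "z = b"
    using new(1) by auto
  moreover have "c \<notin> branch u v" "c \<in> V"
    using t new(2) C_subset_V[of t] st unfolding enters_def by auto
  ultimately have "b = v \<and> c = u"
    using edge_leaving_branch[OF e z(2)] new(3) by (simp add: insert_commute)
  then show ?thesis
    by auto
qed

lemma entry_times_disjoint:
  assumes "e1 \<in> E" "e2 \<in> E" "t \<in> entry_times e1" "t \<in> entry_times e2"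
  shows "e1 = e2"
proof -
  obtain u1 v1 u2 v2 where uv: "e1 = {u1, v1}" "enters t (branch u1 v1)" "e2 = {u2, v2}" "enters t (branch u2 v2)"
    using assms(3,4) unfolding entry_times_def by auto
  then have "Suc t < length cs"
    unfolding enters_def by simp
  then obtain b c where "C (Suc t) - C t = {b}" "c \<in> C t" "{c, b} \<in> E"
    using new_vertex_adjacent by blast
  then show ?thesis
    using entry_edge[of u1 v1] entry_edge[of u2 v2] uv assms(1,2) by metis
qed

lemma sum_card_entry_times_le: "(\<Sum>e\<in>E. card (entry_times e)) \<le> l"
proof -
  have "(\<Sum>e\<in>E. card (entry_times e)) = card (\<Union>e\<in>E. entry_times e)"
    using finite_E finite_entry_times entry_times_disjoint
    by (intro card_UN_disjoint[symmetric]) blast+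
  also have "\<dots> \<le> card {..<l}"
    using entry_times_subset by (intro card_mono) auto
  finally show ?thesis
    by simp
qed

lemma entry_time_exists:
  assumes "a \<le> j" "j < length cs" "C a \<inter> branch u v = {}" "C j \<inter> branch u v \<noteq> {}"
  shows "\<exists>t\<in>entry_times {u, v}. a \<le> t \<and> t < j"
  using enters_between[OF assms] unfolding entry_times_def by blast

lemma config_meets_both_branches:
  assumes t: "t < length cs" and e: "{u, v} \<in> E"
    and "C t \<inter> branch u v \<noteq> {}" "C t \<inter> branch v u \<noteq> {}"
  shows "{u, v} \<subseteq> C t"
proof -
  obtain a b where ab: "a \<in> C t" "a \<in> branch u v" "b \<in> C t" "b \<in> branch v u"
    using assms(3,4) by blast
  then have "b \<notin> branch u v"
    using branches_disjoint[OF e] by blast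
  then show ?thesis
    using connected_on_meets_branches[OF connected_C[OF t] e ab(1,2,3)] by blast
qed

lemma far_config_avoids_branch:
  assumes t: "t < length cs" and e: "{u, v} \<in> E"
    and w: "w \<in> C t" "w \<in> branch u v" "k \<le> d u w"
  shows "C t \<inter> branch v u = {}"
proof (rule ccontr)
  assume "C t \<inter> branch v u \<noteq> {}"
  then have "u \<in> C t"
    using config_meets_both_branches[OF t e] w(1,2) by blast
  then have "d u w \<le> card (C t) - 1"
    using connected_on_gdist_le[OF connected_C[OF t] _ C_subset_V[OF t] _ w(1)] by simp
  then show False
    using card_C[OF t] w(3) k by simp
qed

lemma entry_times_nonempty:
  assumes e: "e \<in> E" and out: "\<not> e \<subseteq> C 0"
  shows "entry_times e \<noteq> {}"
proof -
  obtain u0 v0 where e0: "e = {u0, v0}" "{u0, v0} \<in> E" "{v0, u0} \<in> E"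
    using edge_cases[OF e] e by (metis insert_commute)
  then have "C 0 \<inter> branch u0 v0 = {} \<or> C 0 \<inter> branch v0 u0 = {}"
    using config_meets_both_branches[OF zero_less] out by blast
  then obtain u v where uv: "e = {u, v}" "C 0 \<inter> branch u v = {}"
    using e0(1) by (metis insert_commute)
  then have "v \<in> V"
    using e edge_in_V by simp
  then obtain j where "j < length cs" "v \<in> C j" "v \<in> branch u v"
    using covered branch_self by blast
  then show ?thesis
    using entry_time_exists[of 0 j u v] uv by blast
qed

lemma deep_arc_entry_times:
  assumes Q: "is_path V E Q" and hd: "hd Q \<in> C 0" and last: "last Q \<in> C l"
    and uv: "(u, v) \<in> deep_arcs k (set Q)"
  shows "\<exists>t2\<in>entry_times {u, v}. \<not> {u, v} \<subseteq> C 0 \<longrightarrow> (\<exists>t1\<in>entry_times {u, v}. t1 < t2)"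
proof -
  obtain w where w: "w \<in> V" "d v w < d u w" "k \<le> d u w"
    and e: "{u, v} \<in> E" and side: "on_side u v (set Q)"
    using uv unfolding deep_arcs_def by auto
  have e': "{v, u} \<in> E"
    using e by (simp add: insert_commute)
  have w_branch: "w \<in> branch u v"
    using mem_branch_iff[OF e w(1)] w(2) by simp
  have "hd Q \<in> set Q" "last Q \<in> set Q"
    using Q unfolding is_path_def by auto
  then have Q_branch: "hd Q \<in> branch v u" "last Q \<in> branch v u"
    using side mem_branch_iff[OF e'] path_ends_in_V[OF Q] unfolding on_side_def by auto
  obtain j where j: "j < length cs" "w \<in> C j"
    using covered w(1) by blast
  have "j \<le> l" "C j \<inter> branch v u = {}" "C l \<inter> branch v u \<noteq> {}"
    using far_config_avoids_branch[OF j(1) e j(2) w_branch w(3)] j(1) last Q_branch(2) by auto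
  then have "\<exists>t\<in>entry_times {v, u}. j \<le> t \<and> t < l"
    by (intro entry_time_exists[OF _ l_less])
  then obtain t2 where t2: "t2 \<in> entry_times {u, v}" "j \<le> t2"
    by (auto simp: insert_commute)
  moreover have "\<exists>t1\<in>entry_times {u, v}. t1 < t2" if out: "\<not> {u, v} \<subseteq> C 0"
  proof -
    have "C 0 \<inter> branch u v = {}"
      using config_meets_both_branches[OF zero_less e] hd Q_branch(1) out by blast
    then show ?thesis
      using entry_time_exists[of 0 j u v] j w_branch t2(2) by fastforce
  qed
  ultimately show ?thesis
    by blast
qed

lemma card_entry_times_ge:
  assumes Q: "is_path V E Q" and hd: "hd Q \<in> C 0" and last: "last Q \<in> C l" and e: "e \<in> E"
  shows "(if \<not> e \<subseteq> C 0 then 1 else 0) + dkP k V E Q e \<le> card (entry_times e)"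
proof (cases "\<exists>u v. e = {u, v} \<and> (u, v) \<in> deep_arcs k (set Q)")
  case True
  then obtain u v where uv: "e = {u, v}" "(u, v) \<in> deep_arcs k (set Q)"
    by blast
  obtain t2 where t2: "t2 \<in> entry_times e" "\<not> e \<subseteq> C 0 \<longrightarrow> (\<exists>t1\<in>entry_times e. t1 < t2)"
    using deep_arc_entry_times[OF Q hd last uv(2)] uv(1) by blast
  have "(if \<not> e \<subseteq> C 0 then 1 else 0) + 1 \<le> card (entry_times e)"
  proof (cases "e \<subseteq> C 0")
    case True
    then show ?thesis
      using t2(1) finite_entry_times by (simp add: Suc_le_eq card_gt_0_iff) blast
  next
    case False
    then obtain t1 where "t1 \<in> entry_times e" "t1 < t2"
      using t2(2) by blast
    then have "card {t1, t2} \<le> card (entry_times e)"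
      using t2(1) finite_entry_times by (intro card_mono) auto
    then show ?thesis
      using False \<open>t1 < t2\<close> by simp
  qed
  then show ?thesis
    using dkP_eq_deep_arc[OF Q e] True by simp
next
  case False
  then have "dkP k V E Q e = 0"
    using dkP_eq_deep_arc[OF Q e] by simp
  moreover have "1 \<le> card (entry_times e)" if "\<not> e \<subseteq> C 0"
    using entry_times_nonempty[OF e that] finite_entry_times by (simp add: Suc_le_eq card_gt_0_iff)
  ultimately show ?thesis
    by simp
qed

lemma walk_length_bound:
  assumes P: "longest_path V E P"
  shows "(card V - k) + card (deep_arcs k (set P)) \<le> l"
proof -
  obtain x y where xy: "x \<in> C 0" "y \<in> C l"
    using C_nonempty[OF zero_less] C_nonempty[OF l_less] by (meson ex_in_conv)
  moreover have "x \<in> V" "y \<in> V"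
    using xy C_subset_V zero_less l_less by blast+
  ultimately obtain Q where Q: "is_path V E Q" "hd Q \<in> C 0" "last Q \<in> C l"
    using path_exists by metis
  have "card V - k = card (V - C 0)"
    using card_C[OF zero_less] C_subset_V[OF zero_less] finite_V
    by (simp add: card_Diff_subset finite_subset)
  also have "\<dots> \<le> card {e\<in>E. \<not> e \<subseteq> C 0}"
    using card_diff_le_card_boundary_edges[OF C_subset_V[OF zero_less] xy(1)] .
  also have "\<dots> = (\<Sum>e\<in>E. if \<not> e \<subseteq> C 0 then 1 else 0)"
    using sum.inter_filter[OF finite_E, of "\<lambda>_. 1 :: nat"] by simp
  finally have "card V - k \<le> (\<Sum>e\<in>E. if \<not> e \<subseteq> C 0 then 1 else 0)" .
  moreover have "card (deep_arcs k (set P)) \<le> (\<Sum>e\<in>E. dkP k V E Q e)"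
    using card_deep_arcs_le_longest_path[OF P Q(1) k] sum_dkP_eq_card_deep_arcs[OF Q(1)] by simp
  moreover have "(\<Sum>e\<in>E. (if \<not> e \<subseteq> C 0 then 1 else 0) + dkP k V E Q e) \<le> (\<Sum>e\<in>E. card (entry_times e))"
    using card_entry_times_ge[OF Q] by (intro sum_mono) blast
  ultimately show ?thesis
    using sum_card_entry_times_le by (simp add: sum.distrib)
qed

end

theorem mainTheorem6:
  fixes V :: "'a set" and E :: "'a set set" and k :: nat and P :: "'a list"
  assumes "is_tree V E"
    and "1 \<le> k" and "k \<le> card V"
    and "longest_path V E P"
  shows "hrk k V E \<ge> enat ((card V - k) + (\<Sum>e\<in>E. dkP k V E P e))"
proof -
  interpret tree V E
    by (rule tree.intro) fact
  have sum_eq: "(\<Sum>e\<in>E. dkP k V E P e) = card (deep_arcs k (set P))"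
    using sum_dkP_eq_card_deep_arcs assms(4) unfolding longest_path_def by blast
  show ?thesis
    unfolding hrk_def
  proof (rule INF_greatest)
    fix cs assume "cs \<in> {cs. spanning_walk V E k cs}"
    then interpret spanning_walk_tree V E k cs
      using assms(1,2) by unfold_locales auto
    show "enat ((card V - k) + (\<Sum>e\<in>E. dkP k V E P e)) \<le> enat (length cs - 1)"
      using walk_length_bound[OF assms(4)] sum_eq by simp
  qed
qed

end
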